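(* There is a Lebesgue measurable set $L\subseteq\mathbb{R}$ such that $\mathbb{R}_L$ is not Lebesgue measurable.
   Context: For $A\subseteq\mathbb{R}$, $\mathbb{R}_A$ is the set of all reals Turing equivalent to some element of $A$. *)

theory Defs
  imports "HOL-Analysis.Analysis" "HOL-Library.Nat_Bijection"
begin

datatype recf =
    Zero
  | Succ
  | Proj nat
  | Comp recf "recf list"
  | Prec recf recf
  | Mn recf
  | Oracle

inductive oracle_eval :: "(nat \<Rightarrow> bool) \<Rightarrow> recf \<Rightarrow> nat list \<Rightarrow> nat \<Rightarrow> bool"
  for A :: "nat \<Rightarrow> bool" where
  ev_zero: "oracle_eval A Zero xs 0"
| ev_succ: "oracle_eval A Succ (x # xs) (Suc x)"
| ev_proj: "i < length xs \<Longrightarrow> oracle_eval A (Proj i) xs (xs ! i)"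
| ev_oracle: "oracle_eval A Oracle (x # xs) (if A x then 1 else 0)"
| ev_comp: "list_all2 (\<lambda>g y. oracle_eval A g xs y) gs ys \<Longrightarrow> oracle_eval A f ys z
            \<Longrightarrow> oracle_eval A (Comp f gs) xs z"
| ev_prec0: "oracle_eval A f xs y \<Longrightarrow> oracle_eval A (Prec f g) (0 # xs) y"
| ev_precS: "oracle_eval A (Prec f g) (n # xs) y \<Longrightarrow> oracle_eval A g (n # y # xs) z
            \<Longrightarrow> oracle_eval A (Prec f g) (Suc n # xs) z"
| ev_mn: "oracle_eval A f (n # xs) 0 \<Longrightarrow> (\<forall>m<n. \<exists>y. oracle_eval A f (m # xs) (Suc y))
            \<Longrightarrow> oracle_eval A (Mn f) xs n"
monos list.rel_mono

definition turing_reducible :: "(nat \<Rightarrow> bool) \<Rightarrow> (nat \<Rightarrow> bool) \<Rightarrow> bool" where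
  "turing_reducible B A \<longleftrightarrow> (\<exists>f. \<forall>n. oracle_eval A f [n] (if B n then 1 else 0))"

definition turing_equiv_set :: "(nat \<Rightarrow> bool) \<Rightarrow> (nat \<Rightarrow> bool) \<Rightarrow> bool" where
  "turing_equiv_set A B \<longleftrightarrow> turing_reducible A B \<and> turing_reducible B A"

section \<open>Reals as sets of naturals (lower Dedekind cut)\<close>

text \<open>Fixed computable enumeration of the rationals (with repetitions).\<close>
definition rat_of_code :: "nat \<Rightarrow> real" where
  "rat_of_code n = (case prod_decode n of (i, k) \<Rightarrow> of_int (int_decode i) / real (Suc k))"

definition real_cut :: "real \<Rightarrow> nat \<Rightarrow> bool" where
  "real_cut x n \<longleftrightarrow> rat_of_code n < x"

definition turing_equiv_real :: "real \<Rightarrow> real \<Rightarrow> bool" where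
  "turing_equiv_real x y \<longleftrightarrow> turing_equiv_set (real_cut x) (real_cut y)"

definition turing_closure :: "real set \<Rightarrow> real set" where
  "turing_closure A = {y. \<exists>x\<in>A. turing_equiv_real y x}"

end

theory Submission
  imports Defs
begin

text \<open>
  Write \<open>\<psi> x\<close> for the real whose binary digits are the Dedekind cut of \<open>x\<close>, i.e.
  \<open>\<psi> x = (\<Sum>m. [q\<^sub>m < x] / 2 ^ (m + 1))\<close> for the fixed enumeration \<open>q\<close> of the rationals.
  The map \<open>\<psi>\<close> is strictly increasing, and its range is null because cuts form a chain, so
  that only \<open>k + 1\<close> different blocks of \<open>k\<close> leading digits occur. Moreover \<open>x\<close> and \<open>\<psi> x\<close> are
  Turing equivalent whenever both are irrational. Hence the null set \<open>N\<close> of the values \<open>\<psi> x\<close>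
  with \<open>x\<close> and \<open>\<psi> x\<close> irrational has a co-countable Turing closure.

  Suppose all Turing closures of measurable sets were measurable. Pick in every degree
  meeting \<open>N\<close> a representative in \<open>N\<close>. The set of reals whose representative lies below \<open>t\<close>
  is the Turing closure of a subset of \<open>N\<close>, so it is measurable; it is invariant under
  \<open>x \<mapsto> 2 x\<close> and \<open>x \<mapsto> x + 1\<close>, and a zero-one law makes it null or co-null in \<open>[0, 1)\<close>.
  Therefore the representative is almost everywhere constant on \<open>[0, 1)\<close>. But each of its
  fibres lies in a single Turing degree, which is countable, so \<open>[0, 1)\<close> would be null.
\<close>

section \<open>Functions recursive in an oracle\<close>

definition recursive_in :: "(nat \<Rightarrow> bool) \<Rightarrow> nat \<Rightarrow> (nat list \<Rightarrow> nat) \<Rightarrow> bool" where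
  "recursive_in A k F \<longleftrightarrow> (\<exists>f. \<forall>xs. length xs = k \<longrightarrow> oracle_eval A f xs (F xs))"

lemma recursive_in_cong:
  assumes "recursive_in A k F" and "\<And>xs. length xs = k \<Longrightarrow> F xs = G xs"
  shows "recursive_in A k G"
  using assms by (auto simp: recursive_in_def)

named_theorems recursive_in_intros

lemma recursive_in_zero: "recursive_in A k (\<lambda>_. 0)"
  by (auto simp: recursive_in_def intro: oracle_eval.intros)

lemma recursive_in_proj [recursive_in_intros]: "i < k \<Longrightarrow> recursive_in A k (\<lambda>xs. xs ! i)"
  by (auto simp: recursive_in_def intro: oracle_eval.intros)

lemma recursive_in_succ: "recursive_in A 1 (\<lambda>xs. Suc (xs ! 0))"
  unfolding recursive_in_def
  by (intro exI[of _ Succ]) (auto simp: length_Suc_conv intro: oracle_eval.ev_succ)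

lemma recursive_in_oracle: "recursive_in A 1 (\<lambda>xs. of_bool (A (xs ! 0)))"
proof -
  have "oracle_eval A Oracle xs (of_bool (A (xs ! 0)))" if len: "length xs = 1" for xs
  proof -
    obtain x where "xs = [x]"
      using len by (cases xs) auto
    then show ?thesis
      using oracle_eval.ev_oracle[of A x "[]"] by (simp only: of_bool_def nth_Cons_0)
  qed
  then show ?thesis
    unfolding recursive_in_def by blast
qed

lemma recursive_in_comp:
  assumes F: "recursive_in A (length Gs) F" and Gs: "\<forall>G\<in>set Gs. recursive_in A k G"
  shows "recursive_in A k (\<lambda>xs. F (map (\<lambda>G. G xs) Gs))"
proof -
  let ?computes = "\<lambda>g G. \<forall>xs. length xs = k \<longrightarrow> oracle_eval A g xs (G xs)"
  have "\<exists>gs. list_all2 ?computes gs Gs"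
    using Gs
  proof (induction Gs)
    case (Cons G Gs)
    then obtain g gs where "?computes g G" "list_all2 ?computes gs Gs"
      by (auto simp: recursive_in_def)
    then show ?case by (intro exI[of _ "g # gs"]) simp
  qed simp
  then obtain gs where gs: "list_all2 ?computes gs Gs" ..
  obtain f where f: "\<And>ys. length ys = length Gs \<Longrightarrow> oracle_eval A f ys (F ys)"
    using F by (auto simp: recursive_in_def)
  have "oracle_eval A (Comp f gs) xs (F (map (\<lambda>G. G xs) Gs))" if "length xs = k" for xs
  proof (rule oracle_eval.ev_comp)
    show "list_all2 (\<lambda>g y. oracle_eval A g xs y) gs (map (\<lambda>G. G xs) Gs)"
      using gs that by (induction rule: list_all2_induct) auto
  qed (simp add: f)
  then show ?thesis by (auto simp: recursive_in_def)
qed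

lemma recursive_in_prim_rec:
  assumes G: "recursive_in A k G" and H: "recursive_in A (Suc (Suc k)) H"
    and F0: "\<And>ys. length ys = k \<Longrightarrow> F (0 # ys) = G ys"
    and FSuc: "\<And>n ys. length ys = k \<Longrightarrow> F (Suc n # ys) = H (n # F (n # ys) # ys)"
  shows "recursive_in A (Suc k) F"
proof -
  obtain g h where
    g: "\<And>ys. length ys = k \<Longrightarrow> oracle_eval A g ys (G ys)" and
    h: "\<And>zs. length zs = Suc (Suc k) \<Longrightarrow> oracle_eval A h zs (H zs)"
    using G H by (auto simp: recursive_in_def)
  have "oracle_eval A (Prec g h) (n # ys) (F (n # ys))" if "length ys = k" for n ys
    using that
  proof (induction n)
    case 0
    then show ?case by (simp add: F0 g oracle_eval.ev_prec0)
  next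
    case (Suc n)
    then show ?case by (simp add: FSuc h oracle_eval.ev_precS)
  qed
  then show ?thesis
    unfolding recursive_in_def by (auto simp: length_Suc_conv)
qed

lemma recursive_in_minimization:
  assumes F: "recursive_in A (Suc k) F" and ex: "\<And>xs. length xs = k \<Longrightarrow> \<exists>n. F (n # xs) = 0"
  shows "recursive_in A k (\<lambda>xs. LEAST n. F (n # xs) = 0)"
proof -
  obtain f where f: "\<And>zs. length zs = Suc k \<Longrightarrow> oracle_eval A f zs (F zs)"
    using F by (auto simp: recursive_in_def)
  have "oracle_eval A (Mn f) xs (LEAST n. F (n # xs) = 0)" if "length xs = k" for xs
  proof (rule oracle_eval.ev_mn)
    show "oracle_eval A f ((LEAST n. F (n # xs) = 0) # xs) 0"
      using f[of "(LEAST n. F (n # xs) = 0) # xs"] LeastI_ex[OF ex[OF that]] that by simp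
    show "\<forall>m<(LEAST n. F (n # xs) = 0). \<exists>y. oracle_eval A f (m # xs) (Suc y)"
    proof (intro allI impI)
      fix m assume "m < (LEAST n. F (n # xs) = 0)"
      then have "F (m # xs) \<noteq> 0" by (rule not_less_Least)
      then show "\<exists>y. oracle_eval A f (m # xs) (Suc y)"
        using f[of "m # xs"] that by (metis length_Cons not0_implies_Suc)
    qed
  qed
  then show ?thesis by (auto simp: recursive_in_def)
qed

lemma recursive_in_compose1:
  "recursive_in A 1 (\<lambda>v. f (v ! 0)) \<Longrightarrow> recursive_in A k G \<Longrightarrow> recursive_in A k (\<lambda>xs. f (G xs))"
  using recursive_in_comp[of A "[G]" "\<lambda>v. f (v ! 0)"] by simp

lemma recursive_in_compose2:
  "recursive_in A 2 (\<lambda>v. f (v ! 0) (v ! 1)) \<Longrightarrow> recursive_in A k G \<Longrightarrow> recursive_in A k H \<Longrightarrow>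
    recursive_in A k (\<lambda>xs. f (G xs) (H xs))"
  using recursive_in_comp[of A "[G, H]" "\<lambda>v. f (v ! 0) (v ! 1)"] by (simp add: numeral_2_eq_2)

lemma recursive_in_const [recursive_in_intros]: "recursive_in A k (\<lambda>_. c)"
proof (induction c)
  case 0
  show ?case by (rule recursive_in_zero)
next
  case (Suc c)
  show ?case using recursive_in_compose1[OF recursive_in_succ Suc] .
qed

lemma recursive_in_Suc [recursive_in_intros]:
  "recursive_in A k G \<Longrightarrow> recursive_in A k (\<lambda>xs. Suc (G xs))"
  by (rule recursive_in_compose1[OF recursive_in_succ])

lemma recursive_in_oracle_query [recursive_in_intros]:
  "recursive_in A k G \<Longrightarrow> recursive_in A k (\<lambda>xs. of_bool (A (G xs)))"
  by (rule recursive_in_compose1[OF recursive_in_oracle])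

lemma recursive_in_rec_unary:
  assumes h: "recursive_in A 2 (\<lambda>v. h (v ! 0) (v ! 1))"
    and f: "f 0 = c" "\<And>n. f (Suc n) = h n (f n)"
  shows "recursive_in A 1 (\<lambda>v. f (v ! 0))"
proof -
  have "recursive_in A (Suc 0) (\<lambda>v. f (v ! 0))"
    by (rule recursive_in_prim_rec[OF recursive_in_const[of A 0 c]])
       (use h f in \<open>auto simp: numeral_2_eq_2 length_Suc_conv\<close>)
  then show ?thesis by simp
qed

lemma recursive_in_rec_binary:
  assumes g: "recursive_in A 1 (\<lambda>v. g (v ! 0))"
    and h: "recursive_in A 3 (\<lambda>v. h (v ! 0) (v ! 1) (v ! 2))"
    and f: "\<And>y. f 0 y = g y" "\<And>n y. f (Suc n) y = h n (f n y) y"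
  shows "recursive_in A 2 (\<lambda>v. f (v ! 0) (v ! 1))"
proof -
  have "recursive_in A (Suc (Suc 0)) (\<lambda>v. f (v ! 0) (v ! 1))"
    by (rule recursive_in_prim_rec[OF g[unfolded One_nat_def]])
       (use h f in \<open>auto simp: numeral_3_eq_3 length_Suc_conv\<close>)
  then show ?thesis by (simp add: numeral_2_eq_2)
qed

lemma recursive_in_add [recursive_in_intros]:
  "recursive_in A k G \<Longrightarrow> recursive_in A k H \<Longrightarrow> recursive_in A k (\<lambda>xs. G xs + H xs)"
  by (rule recursive_in_compose2[OF recursive_in_rec_binary[where h = "\<lambda>_ z _. Suc z"]])
     (auto intro!: recursive_in_intros)

lemma recursive_in_mult [recursive_in_intros]:
  "recursive_in A k G \<Longrightarrow> recursive_in A k H \<Longrightarrow> recursive_in A k (\<lambda>xs. G xs * H xs)"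
  by (rule recursive_in_compose2[OF recursive_in_rec_binary[where h = "\<lambda>_ z y. z + y"]])
     (auto intro!: recursive_in_intros)

lemma recursive_in_pred: "recursive_in A 1 (\<lambda>v. v ! 0 - 1)"
  by (rule recursive_in_rec_unary[where h = "\<lambda>n _. n"]) (auto intro!: recursive_in_intros)

lemma recursive_in_diff [recursive_in_intros]:
  assumes "recursive_in A k G" "recursive_in A k H"
  shows "recursive_in A k (\<lambda>xs. G xs - H xs)"
proof -
  have "recursive_in A 2 (\<lambda>v. v ! 1 - v ! 0)"
  proof (rule recursive_in_rec_binary[where f = "\<lambda>n y. y - n" and h = "\<lambda>_ z _. z - 1"])
    show "recursive_in A 3 (\<lambda>v. v ! 1 - 1)"
      by (rule recursive_in_compose1[OF recursive_in_pred]) (simp add: recursive_in_proj)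
  qed (auto intro: recursive_in_proj)
  from recursive_in_compose2[OF this assms(2,1)] show ?thesis by simp
qed

lemma recursive_in_less [recursive_in_intros]:
  assumes "recursive_in A k G" "recursive_in A k H"
  shows "recursive_in A k (\<lambda>xs. of_bool (G xs < H xs))"
proof -
  have "recursive_in A 1 (\<lambda>v. of_bool (0 < v ! 0))"
    by (rule recursive_in_rec_unary[where h = "\<lambda>_ _. 1"]) (auto intro: recursive_in_intros)
  from recursive_in_compose1[OF this recursive_in_diff[OF assms(2,1)]] show ?thesis
    by (rule recursive_in_cong) auto
qed

lemma recursive_in_le [recursive_in_intros]:
  assumes "recursive_in A k G" "recursive_in A k H"
  shows "recursive_in A k (\<lambda>xs. of_bool (G xs \<le> H xs))"
  using recursive_in_less[OF assms(1) recursive_in_Suc[OF assms(2)]]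
  by (rule recursive_in_cong) auto

lemma recursive_in_disj [recursive_in_intros]:
  assumes "recursive_in A k (\<lambda>xs. of_bool (P xs))" "recursive_in A k (\<lambda>xs. of_bool (Q xs))"
  shows "recursive_in A k (\<lambda>xs. of_bool (P xs \<or> Q xs))"
  using recursive_in_less[OF recursive_in_const recursive_in_add[OF assms]]
  by (rule recursive_in_cong) auto

lemma recursive_in_If [recursive_in_intros]:
  assumes "recursive_in A k (\<lambda>xs. of_bool (P xs))" "recursive_in A k G" "recursive_in A k H"
  shows "recursive_in A k (\<lambda>xs. if P xs then G xs else H xs)"
proof -
  have "recursive_in A k (\<lambda>xs. of_bool (P xs) * G xs + (1 - of_bool (P xs)) * H xs)"
    using assms by (intro recursive_in_intros)
  then show ?thesis by (rule recursive_in_cong) auto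
qed

lemma recursive_in_even [recursive_in_intros]:
  "recursive_in A k G \<Longrightarrow> recursive_in A k (\<lambda>xs. of_bool (even (G xs)))"
  by (rule recursive_in_compose1[OF recursive_in_rec_unary[where h = "\<lambda>_ z. 1 - z"]])
     (auto intro!: recursive_in_intros)

lemma recursive_in_div2 [recursive_in_intros]:
  "recursive_in A k G \<Longrightarrow> recursive_in A k (\<lambda>xs. G xs div 2)"
  by (rule recursive_in_compose1[OF recursive_in_rec_unary[where h = "\<lambda>n z. z + (1 - of_bool (even n))"]])
     (auto intro!: recursive_in_intros)

lemma recursive_in_power2 [recursive_in_intros]:
  "recursive_in A k G \<Longrightarrow> recursive_in A k (\<lambda>xs. 2 ^ G xs)"
  by (rule recursive_in_compose1[OF recursive_in_rec_unary[where h = "\<lambda>_ z. z + z"]])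
     (auto intro!: recursive_in_intros)

lemma recursive_in_triangle [recursive_in_intros]:
  "recursive_in A k G \<Longrightarrow> recursive_in A k (\<lambda>xs. triangle (G xs))"
  by (rule recursive_in_compose1[OF recursive_in_rec_unary[where h = "\<lambda>n z. z + Suc n"]])
     (auto intro!: recursive_in_intros)

lemma recursive_in_prod_encode [recursive_in_intros]:
  assumes "recursive_in A k G" "recursive_in A k H"
  shows "recursive_in A k (\<lambda>xs. prod_encode (G xs, H xs))"
  using assms by (simp add: prod_encode_def recursive_in_intros)

lemma recursive_in_Least:
  assumes P: "recursive_in A 2 (\<lambda>v. of_bool (P (v ! 0) (v ! 1)))"
    and ex: "\<And>y. \<exists>n. P n y" and G: "recursive_in A k G"
  shows "recursive_in A k (\<lambda>xs. LEAST n. P n (G xs))"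
proof -
  have "recursive_in A (Suc 0) (\<lambda>xs. LEAST n. 1 - of_bool (P ((n # xs) ! 0) ((n # xs) ! 1)) = (0::nat))"
    by (rule recursive_in_minimization[where F = "\<lambda>v. 1 - of_bool (P (v ! 0) (v ! 1))"])
       (use P ex in \<open>auto simp: numeral_2_eq_2 intro!: recursive_in_intros\<close>)
  then have "recursive_in A 1 (\<lambda>v. LEAST n. P n (v ! 0))"
    unfolding One_nat_def by (rule recursive_in_cong) simp
  then show ?thesis by (rule recursive_in_compose1[OF _ G])
qed

section \<open>Codes of rationals\<close>

lemma prod_decode_via_triangle:
  fixes n :: nat
  defines "s \<equiv> LEAST s. n < triangle (Suc s)"
  shows "prod_decode n = (n - triangle s, s - (n - triangle s))"
proof -
  obtain i k where ik: "prod_decode n = (i, k)" by fastforce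
  have n: "n = triangle (i + k) + i"
    using prod_decode_inverse[of n] ik by (simp add: prod_encode_def)
  have triangle_mono: "triangle a \<le> triangle b" if "a \<le> b" for a b
    using that by (induction b) (auto simp: le_Suc_eq)
  have "s = i + k"
    unfolding s_def
  proof (rule Least_equality)
    show "n < triangle (Suc (i + k))" using n by simp
    show "i + k \<le> s'" if "n < triangle (Suc s')" for s'
      using that n triangle_mono[of "Suc s'" "i + k"] by linarith
  qed
  then show ?thesis using ik n by simp
qed

lemma recursive_in_prod_decode [recursive_in_intros]:
  assumes G: "recursive_in A k G"
  shows "recursive_in A k (\<lambda>xs. fst (prod_decode (G xs)))"
    and "recursive_in A k (\<lambda>xs. snd (prod_decode (G xs)))"
proof -
  have s: "recursive_in A k (\<lambda>xs. LEAST s. G xs < triangle (Suc s))"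
  proof (rule recursive_in_Least[where P = "\<lambda>s n. n < triangle (Suc s)", OF _ _ G])
    show "recursive_in A 2 (\<lambda>v. of_bool (v ! 1 < triangle (Suc (v ! 0))))"
      by (auto intro!: recursive_in_intros)
    show "\<exists>s. n < triangle (Suc s)" for n
      by (rule exI[of _ n]) (induction n; simp)
  qed
  show "recursive_in A k (\<lambda>xs. fst (prod_decode (G xs)))"
    by (rule recursive_in_cong[OF recursive_in_diff[OF G recursive_in_triangle[OF s]]])
       (simp add: prod_decode_via_triangle)
  show "recursive_in A k (\<lambda>xs. snd (prod_decode (G xs)))"
    by (rule recursive_in_cong[OF recursive_in_diff[OF s recursive_in_diff[OF G recursive_in_triangle[OF s]]]])
       (simp add: prod_decode_via_triangle)
qed

text \<open>
  The numerator of \<^const>\<open>rat_of_code\<close> is split as \<open>code_num_pos n - code_num_neg n\<close> so that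
  recursive functions, which act on natural numbers, can compute with it.
\<close>
definition code_num_pos :: "nat \<Rightarrow> nat" where
  "code_num_pos n = (let i = fst (prod_decode n) in if even i then i div 2 else 0)"

definition code_num_neg :: "nat \<Rightarrow> nat" where
  "code_num_neg n = (let i = fst (prod_decode n) in if even i then 0 else Suc (i div 2))"

definition code_den :: "nat \<Rightarrow> nat" where
  "code_den n = Suc (snd (prod_decode n))"

definition code_of_frac :: "nat \<Rightarrow> nat \<Rightarrow> nat \<Rightarrow> nat" where
  "code_of_frac p q d = prod_encode (if q \<le> p then 2 * (p - q) else 2 * (q - p) - 1, d - 1)"

lemma code_den_pos [simp]: "0 < code_den n"
  by (simp add: code_den_def)

lemma int_decode_parity: "int_decode i = (if even i then int (i div 2) else - int (i div 2) - 1)"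
  by (simp add: int_decode_def sum_decode_def)

lemma rat_of_code_eq:
  "rat_of_code n = (real (code_num_pos n) - real (code_num_neg n)) / real (code_den n)"
  by (simp add: rat_of_code_def code_num_pos_def code_num_neg_def code_den_def int_decode_parity
      split: prod.split)

lemma rat_of_code_code_of_frac:
  assumes "0 < d"
  shows "rat_of_code (code_of_frac p q d) = (real p - real q) / real d"
proof -
  have "int_decode (if q \<le> p then 2 * (p - q) else 2 * (q - p) - 1) = int p - int q"
    by (auto simp: int_decode_parity elim!: oddE)
  then show ?thesis
    using assms by (simp add: rat_of_code_def code_of_frac_def)
qed

lemma rat_of_code_dyadic: "rat_of_code (code_of_frac p 0 (2 ^ N)) = real p / 2 ^ N"
  by (simp add: rat_of_code_code_of_frac)

lemma rat_of_code_in_Rats: "rat_of_code n \<in> \<rat>"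
  by (simp add: rat_of_code_def split: prod.splits)

lemma rat_of_code_surj: "q \<in> \<rat> \<Longrightarrow> \<exists>n. rat_of_code n = q"
proof (elim Rats_cases')
  fix a b :: int assume "0 < b" and q: "q = of_int a / of_int b"
  then have "rat_of_code (prod_encode (int_encode a, nat b - 1)) = q"
    by (simp add: rat_of_code_def)
  then show ?thesis by blast
qed

lemma rat_of_code_between: "x < y \<Longrightarrow> \<exists>n. x < rat_of_code n \<and> rat_of_code n < y"
  using Rats_dense_in_real rat_of_code_surj by metis

lemma rat_of_code_less_iff:
  "rat_of_code m < rat_of_code n \<longleftrightarrow>
    code_num_pos m * code_den n + code_num_neg n * code_den m
      < code_num_pos n * code_den m + code_num_neg m * code_den n"
proof -
  have "rat_of_code m < rat_of_code n \<longleftrightarrow>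
      (real (code_num_pos m) - real (code_num_neg m)) * real (code_den n)
        < (real (code_num_pos n) - real (code_num_neg n)) * real (code_den m)"
    unfolding rat_of_code_eq by (simp add: divide_less_eq less_divide_eq field_simps)
  also have "\<dots> \<longleftrightarrow> real (code_num_pos m * code_den n + code_num_neg n * code_den m)
        < real (code_num_pos n * code_den m + code_num_neg m * code_den n)"
    by (simp add: algebra_simps)
  finally show ?thesis by (simp only: of_nat_less_iff)
qed

lemma recursive_in_rat_code [recursive_in_intros]:
  assumes G: "recursive_in A k G"
  shows "recursive_in A k (\<lambda>xs. code_num_pos (G xs))"
    and "recursive_in A k (\<lambda>xs. code_num_neg (G xs))"
    and "recursive_in A k (\<lambda>xs. code_den (G xs))"
  using G by (simp_all add: code_num_pos_def code_num_neg_def code_den_def Let_def recursive_in_intros)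

lemma recursive_in_code_of_frac [recursive_in_intros]:
  "recursive_in A k G \<Longrightarrow> recursive_in A k H \<Longrightarrow> recursive_in A k K \<Longrightarrow>
    recursive_in A k (\<lambda>xs. code_of_frac (G xs) (H xs) (K xs))"
  by (simp add: code_of_frac_def recursive_in_intros)

lemma recursive_in_rat_of_code_less [recursive_in_intros]:
  "recursive_in A k G \<Longrightarrow> recursive_in A k H \<Longrightarrow>
    recursive_in A k (\<lambda>xs. of_bool (rat_of_code (G xs) < rat_of_code (H xs)))"
  by (simp add: rat_of_code_less_iff recursive_in_intros)

section \<open>Turing reducibility and Turing equivalence of reals\<close>

lemma turing_reducible_if_recursive_in:
  assumes "recursive_in A 1 (\<lambda>v. of_bool (B (v ! 0)))"
  shows "turing_reducible B A"
proof -
  obtain f where f: "\<And>xs. length xs = 1 \<Longrightarrow> oracle_eval A f xs (of_bool (B (xs ! 0)))"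
    using assms by (auto simp: recursive_in_def)
  have "oracle_eval A f [n] (if B n then 1 else 0)" for n
    using f[of "[n]"] by (simp only: of_bool_def nth_Cons_0 length_Cons list.size One_nat_def)
  then show ?thesis
    unfolding turing_reducible_def by blast
qed

lemma turing_reducible_via_map:
  assumes "recursive_in A 1 (\<lambda>v. g (v ! 0))" and "\<And>n. B n \<longleftrightarrow> A (g n)"
  shows "turing_reducible B A"
  using assms by (auto intro!: turing_reducible_if_recursive_in recursive_in_intros)

lemma turing_reducible_refl: "turing_reducible A A"
  using recursive_in_oracle by (rule turing_reducible_if_recursive_in)

primrec replace_oracle :: "recf \<Rightarrow> recf \<Rightarrow> recf" where
  "replace_oracle h Zero = Zero"
| "replace_oracle h Succ = Succ"
| "replace_oracle h (Proj i) = Proj i"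
| "replace_oracle h (Comp f gs) = Comp (replace_oracle h f) (map (replace_oracle h) gs)"
| "replace_oracle h (Prec f g) = Prec (replace_oracle h f) (replace_oracle h g)"
| "replace_oracle h (Mn f) = Mn (replace_oracle h f)"
| "replace_oracle h Oracle = Comp h [Proj 0]"

lemma oracle_eval_replace_oracle:
  assumes "oracle_eval B f xs y" and h: "\<And>n. oracle_eval A h [n] (if B n then 1 else 0)"
  shows "oracle_eval A (replace_oracle h f) xs y"
  using assms(1)
proof (induction rule: oracle_eval.induct)
  case (ev_oracle x xs)
  have "list_all2 (\<lambda>g y. oracle_eval A g (x # xs) y) [Proj 0] [x]"
    using oracle_eval.ev_proj[of 0 "x # xs" A] by simp
  from oracle_eval.ev_comp[OF this h[of x]] show ?case by simp
next
  case (ev_comp xs gs ys f z)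
  have "list_all2 (\<lambda>g y. oracle_eval A g xs y) (map (replace_oracle h) gs) ys"
    using ev_comp(1) by (simp add: list_all2_map1 list_all2_mono)
  then show ?case using ev_comp.IH(2) by (simp add: oracle_eval.ev_comp)
next
  case (ev_mn f n xs)
  then show ?case by (auto intro!: oracle_eval.ev_mn)
qed (simp_all add: oracle_eval.ev_zero oracle_eval.ev_succ oracle_eval.ev_proj
       oracle_eval.ev_prec0 oracle_eval.ev_precS)

lemma turing_reducible_trans:
  "turing_reducible C B \<Longrightarrow> turing_reducible B A \<Longrightarrow> turing_reducible C A"
  unfolding turing_reducible_def using oracle_eval_replace_oracle by blast

lemma oracle_eval_deterministic:
  "oracle_eval A f xs y \<Longrightarrow> oracle_eval A f xs y' \<Longrightarrow> y = y'"
proof (induction arbitrary: y' rule: oracle_eval.induct)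
  case (ev_comp xs gs ys f z)
  from ev_comp.prems obtain ys' where
    ys': "list_all2 (\<lambda>g y. oracle_eval A g xs y) gs ys'" and z': "oracle_eval A f ys' y'"
    by (cases rule: oracle_eval.cases) auto
  have "ys = ys'"
    using ev_comp.IH(1) ys'
    by (induction arbitrary: ys' rule: list_all2_induct) (auto simp: list_all2_Cons1)
  then show ?case using ev_comp.IH(2) z' by simp
next
  case (ev_precS f g n xs y z)
  from ev_precS.prems obtain y2 where
    "oracle_eval A (Prec f g) (n # xs) y2" and "oracle_eval A g (n # y2 # xs) y'"
    by (cases rule: oracle_eval.cases) auto
  then show ?case using ev_precS.IH by metis
next
  case (ev_mn f n xs)
  from ev_mn.prems have zero: "oracle_eval A f (y' # xs) 0"
    and pos: "\<forall>m<y'. \<exists>y. oracle_eval A f (m # xs) (Suc y)"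
    by (cases rule: oracle_eval.cases; simp)+
  show ?case
  proof (rule linorder_cases[of n y'])
    assume "n < y'"
    with pos ev_mn.IH(1) show ?thesis by blast
  next
    assume "y' < n"
    with zero ev_mn.IH(2) show ?thesis by blast
  qed
qed (erule oracle_eval.cases; simp)+

instance recf :: countable by countable_datatype

lemma turing_equiv_real_sym: "turing_equiv_real x y \<Longrightarrow> turing_equiv_real y x"
  by (auto simp: turing_equiv_real_def turing_equiv_set_def)

lemma turing_equiv_real_trans:
  "turing_equiv_real x y \<Longrightarrow> turing_equiv_real y z \<Longrightarrow> turing_equiv_real x z"
  unfolding turing_equiv_real_def turing_equiv_set_def using turing_reducible_trans by blast

lemma real_cut_inject:
  assumes "real_cut x = real_cut y"
  shows "x = y"
proof (rule ccontr)
  assume "x \<noteq> y"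
  then have "min x y < max x y" by (auto simp: min_def max_def)
  then obtain n where "min x y < rat_of_code n" "rat_of_code n < max x y"
    using rat_of_code_between by blast
  moreover have "rat_of_code n < x \<longleftrightarrow> rat_of_code n < y"
    using assms by (simp add: real_cut_def fun_eq_iff)
  ultimately show False by (auto simp: min_def max_def split: if_splits)
qed

lemma countable_turing_degree: "countable {y. turing_equiv_real y x}"
proof (rule countable_image_inj_on)
  let ?computes = "\<lambda>f y. \<forall>n. oracle_eval (real_cut x) f [n] (if real_cut y n then 1 else 0)"
  define program where "program y = (SOME f. ?computes f y)" for y
  have computes: "?computes (program y) y" if "y \<in> {y. turing_equiv_real y x}" for y
  proof -
    from that obtain f where "?computes f y"
      by (auto simp: turing_equiv_real_def turing_equiv_set_def turing_reducible_def)
    then show ?thesis unfolding program_def by (rule someI)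
  qed
  show "inj_on program {y. turing_equiv_real y x}"
  proof (rule inj_onI)
    fix y z assume y: "y \<in> {y. turing_equiv_real y x}" and z: "z \<in> {y. turing_equiv_real y x}"
      and eq: "program y = program z"
    have "(if real_cut y n then 1 else 0) = (if real_cut z n then 1 else (0::nat))" for n
      using computes[OF y] computes[OF z] unfolding eq by (blast intro: oracle_eval_deterministic)
    then show "y = z"
      by (intro real_cut_inject ext) (metis zero_neq_one)
  qed
qed simp

lemma turing_equiv_real_via_code_maps:
  assumes "\<And>A. recursive_in A 1 (\<lambda>v. g (v ! 0))" and "\<And>A. recursive_in A 1 (\<lambda>v. h (v ! 0))"
    and "\<And>n. rat_of_code n < x \<longleftrightarrow> rat_of_code (g n) < y"
    and "\<And>n. rat_of_code n < y \<longleftrightarrow> rat_of_code (h n) < x"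
  shows "turing_equiv_real x y"
  unfolding turing_equiv_real_def turing_equiv_set_def
proof
  show "turing_reducible (real_cut x) (real_cut y)"
    by (rule turing_reducible_via_map[OF assms(1)]) (simp add: real_cut_def assms(3))
  show "turing_reducible (real_cut y) (real_cut x)"
    by (rule turing_reducible_via_map[OF assms(2)]) (simp add: real_cut_def assms(4))
qed

lemma turing_equiv_real_double: "turing_equiv_real (2 * x) x"
proof (rule turing_equiv_real_via_code_maps)
  let ?half = "\<lambda>n. code_of_frac (code_num_pos n) (code_num_neg n) (2 * code_den n)"
  let ?double = "\<lambda>n. code_of_frac (2 * code_num_pos n) (2 * code_num_neg n) (code_den n)"
  show "recursive_in A 1 (\<lambda>v. ?half (v ! 0))" "recursive_in A 1 (\<lambda>v. ?double (v ! 0))" for A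
    by (auto intro!: recursive_in_intros)
  have half: "rat_of_code (?half n) = rat_of_code n / 2"
    and double: "rat_of_code (?double n) = 2 * rat_of_code n" for n
    by (simp_all add: rat_of_code_code_of_frac rat_of_code_eq[of n] field_simps)
  show "rat_of_code n < 2 * x \<longleftrightarrow> rat_of_code (?half n) < x"
    and "rat_of_code n < x \<longleftrightarrow> rat_of_code (?double n) < 2 * x" for n
    unfolding half double by linarith+
qed

lemma turing_equiv_real_plus1: "turing_equiv_real (x + 1) x"
proof (rule turing_equiv_real_via_code_maps)
  let ?minus1 = "\<lambda>n. code_of_frac (code_num_pos n) (code_num_neg n + code_den n) (code_den n)"
  let ?plus1 = "\<lambda>n. code_of_frac (code_num_pos n + code_den n) (code_num_neg n) (code_den n)"
  show "recursive_in A 1 (\<lambda>v. ?minus1 (v ! 0))" "recursive_in A 1 (\<lambda>v. ?plus1 (v ! 0))" for A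
    by (auto intro!: recursive_in_intros)
  have minus1: "rat_of_code (?minus1 n) = rat_of_code n - 1"
    and plus1: "rat_of_code (?plus1 n) = rat_of_code n + 1" for n
    by (simp_all add: rat_of_code_code_of_frac rat_of_code_eq[of n] field_simps)
  show "rat_of_code n < x + 1 \<longleftrightarrow> rat_of_code (?minus1 n) < x"
    and "rat_of_code n < x \<longleftrightarrow> rat_of_code (?plus1 n) < x + 1" for n
    unfolding minus1 plus1 by linarith+
qed

section \<open>Binary expansions of Dedekind cuts\<close>

definition binary_real :: "(nat \<Rightarrow> bool) \<Rightarrow> real" where
  "binary_real A = (\<Sum>m. of_bool (A m) / 2 ^ Suc m)"

primrec binary_prefix :: "(nat \<Rightarrow> bool) \<Rightarrow> nat \<Rightarrow> nat" where
  "binary_prefix A 0 = 0"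
| "binary_prefix A (Suc n) = 2 * binary_prefix A n + of_bool (A n)"

lemma binary_prefix_eq_sum: "real (binary_prefix A N) / 2 ^ N = (\<Sum>m<N. of_bool (A m) / 2 ^ Suc m)"
  by (induction N) (simp_all add: field_simps)

lemma binary_prefix_mono: "(\<And>m. m < N \<Longrightarrow> A m \<Longrightarrow> B m) \<Longrightarrow> binary_prefix A N \<le> binary_prefix B N"
  by (induction N) (auto simp: of_bool_def)

lemma binary_prefix_cong: "(\<And>m. m < N \<Longrightarrow> A m = B m) \<Longrightarrow> binary_prefix A N = binary_prefix B N"
  by (induction N) auto

lemma recursive_in_binary_prefix:
  assumes "recursive_in A 2 (\<lambda>v. of_bool (P (v ! 0) (v ! 1)))"
  shows "recursive_in A 2 (\<lambda>v. binary_prefix (\<lambda>m. P m (v ! 1)) (v ! 0))"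
  by (rule recursive_in_rec_binary[where g = "\<lambda>_. 0" and h = "\<lambda>n z y. 2 * z + of_bool (P n y)"])
     (auto intro!: recursive_in_intros recursive_in_compose2[OF assms])

lemma recursive_in_binary_prefix_oracle [recursive_in_intros]:
  assumes "recursive_in A k G"
  shows "recursive_in A k (\<lambda>xs. binary_prefix A (G xs))"
proof -
  have "recursive_in A 2 (\<lambda>v. of_bool (A (v ! 0)))"
    by (intro recursive_in_intros) simp
  from recursive_in_compose2[OF recursive_in_binary_prefix[of A "\<lambda>m _. A m", OF this] assms assms]
  show ?thesis by simp
qed

lemma summable_binary_digits: "summable (\<lambda>m. of_bool (A m) / 2 ^ Suc m :: real)"
  by (rule summable_comparison_test'[OF sums_summable[OF power_half_series]])
     (simp add: power_one_over)

lemma binary_real_bounds: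
  "real (binary_prefix A N) / 2 ^ N \<le> binary_real A"
  "binary_real A \<le> (real (binary_prefix A N) + 1) / 2 ^ N"
proof -
  let ?d = "\<lambda>m. of_bool (A m) / 2 ^ Suc m :: real"
  have split: "binary_real A = real (binary_prefix A N) / 2 ^ N + (\<Sum>m. ?d (m + N))"
    unfolding binary_real_def binary_prefix_eq_sum
    using suminf_split_initial_segment[OF summable_binary_digits[of A], of N] by simp
  have tail_summable: "summable (\<lambda>m. ?d (m + N))"
    by (rule summable_ignore_initial_segment[OF summable_binary_digits])
  have "0 \<le> (\<Sum>m. ?d (m + N))"
    using tail_summable by (rule suminf_nonneg) simp
  then show "real (binary_prefix A N) / 2 ^ N \<le> binary_real A"
    using split by linarith
  have "(\<lambda>m. (1/2) ^ N * (1/2) ^ Suc m :: real) sums ((1/2) ^ N * 1)"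
    by (rule sums_mult[OF power_half_series])
  then have "(\<Sum>m. ?d (m + N)) \<le> (1/2) ^ N"
    using tail_summable
    by (intro sums_le[OF _ summable_sums]) (auto simp: power_add power_one_over field_simps)
  then show "binary_real A \<le> (real (binary_prefix A N) + 1) / 2 ^ N"
    using split by (simp add: add_divide_distrib power_one_over)
qed

lemma binary_real_nonneg: "0 \<le> binary_real A"
  using binary_real_bounds(1)[of A 0] by simp

lemma binary_real_le_1: "binary_real A \<le> 1"
  using binary_real_bounds(2)[of A 0] by simp

lemma binary_real_strict_mono:
  assumes "\<And>m. A m \<Longrightarrow> B m" and "B n" and "\<not> A n"
  shows "binary_real A < binary_real B"
proof -
  have "0 < (\<Sum>m. of_bool (B m) / 2 ^ Suc m - of_bool (A m) / 2 ^ Suc m :: real)"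
    using assms by (intro suminf_pos2[where i = n] summable_diff summable_binary_digits)
       (auto simp: of_bool_def divide_right_mono)
  then show ?thesis
    unfolding binary_real_def
    using suminf_diff[OF summable_binary_digits[of B] summable_binary_digits[of A]] by linarith
qed

lemma card_chain_of_subsets:
  assumes chain: "\<And>X Y. X \<in> \<C> \<Longrightarrow> Y \<in> \<C> \<Longrightarrow> X \<subseteq> Y \<or> Y \<subseteq> X"
    and sub: "\<C> \<subseteq> Pow {..<N}"
  shows "card \<C> \<le> Suc N"
proof -
  have sub': "X \<subseteq> {..<N}" if "X \<in> \<C>" for X
    using that sub by blast
  have fin: "finite X" if "X \<in> \<C>" for X
    using sub'[OF that] by (rule finite_subset) simp
  have "inj_on card \<C>"
  proof (rule inj_onI)
    fix X Y assume XY: "X \<in> \<C>" "Y \<in> \<C>" and eq: "card X = card Y"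
    from chain[OF XY] show "X = Y"
    proof
      assume "X \<subseteq> Y"
      from card_subset_eq[OF fin[OF XY(2)] this eq] show ?thesis .
    next
      assume "Y \<subseteq> X"
      from card_subset_eq[OF fin[OF XY(1)] this eq[symmetric]] show ?thesis by simp
    qed
  qed
  moreover have "card X \<le> N" if "X \<in> \<C>" for X
    using card_mono[OF _ sub'[OF that]] by simp
  then have "card ` \<C> \<subseteq> {..N}" by auto
  ultimately show ?thesis
    using card_inj_on_le[of card \<C> "{..N}"] by simp
qed

lemma binary_real_chain_null:
  assumes chain: "\<And>A B. A \<in> C \<Longrightarrow> B \<in> C \<Longrightarrow> A \<le> B \<or> B \<le> A"
  shows "binary_real ` C \<in> null_sets lebesgue"
  unfolding negligible_iff_null_sets[symmetric] negligible_outer_le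
proof (intro allI impI)
  fix e :: real assume "0 < e"
  have "(\<lambda>N. real N / 2 ^ N + 1 / 2 ^ N) \<longlonglongrightarrow> 0 + 0"
    by (intro tendsto_add lim_n_over_pown LIMSEQ_divide_realpow_zero) auto
  then have "eventually (\<lambda>N. real N / 2 ^ N + 1 / 2 ^ N < e) sequentially"
    using \<open>0 < e\<close> by (intro order_tendstoD(2)) auto
  then obtain N where N: "real N / 2 ^ N + 1 / 2 ^ N < e"
    unfolding eventually_sequentially by blast
  define prefix where "prefix A = {m. m < N \<and> A m}" for A :: "nat \<Rightarrow> bool"
  define box where "box Q = {real (binary_prefix (\<lambda>m. m \<in> Q) N) / 2 ^ N ..
      (real (binary_prefix (\<lambda>m. m \<in> Q) N) + 1) / 2 ^ N}" for Q
  let ?P = "prefix ` C"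
  have P: "?P \<subseteq> Pow {..<N}" by (auto simp: prefix_def)
  then have fin: "finite ?P" by (rule finite_subset) simp
  have card: "card ?P \<le> Suc N"
    by (rule card_chain_of_subsets[OF _ P]) (use chain in \<open>auto simp: prefix_def le_fun_def\<close>)
  have "binary_real A \<in> box (prefix A)" for A
  proof -
    have "binary_prefix (\<lambda>m. m \<in> prefix A) N = binary_prefix A N"
      by (rule binary_prefix_cong) (simp add: prefix_def)
    then show ?thesis using binary_real_bounds[of A N] by (simp add: box_def)
  qed
  then have "binary_real ` C \<subseteq> (\<Union>Q\<in>?P. box Q)" by blast
  moreover have "(\<Union>Q\<in>?P. box Q) \<in> lmeasurable"
    by (rule fmeasurable.finite_UN[OF fin]) (simp add: box_def)
  moreover have "measure lebesgue (\<Union>Q\<in>?P. box Q) \<le> e"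
  proof -
    have "measure lebesgue (\<Union>Q\<in>?P. box Q) \<le> (\<Sum>Q\<in>?P. measure lebesgue (box Q))"
      using fin by (intro measure_UNION_le) (auto simp: box_def)
    also have "\<dots> = (\<Sum>Q\<in>?P. 1 / 2 ^ N)"
      by (intro sum.cong) (auto simp: box_def divide_right_mono diff_divide_distrib[symmetric])
    also have "\<dots> = real (card ?P) / 2 ^ N"
      by simp
    also have "\<dots> \<le> real (Suc N) / 2 ^ N"
      using card by (simp add: divide_right_mono)
    also have "\<dots> \<le> e"
      using N by (simp add: add_divide_distrib)
    finally show ?thesis .
  qed
  ultimately show "\<exists>T. binary_real ` C \<subseteq> T \<and> T \<in> lmeasurable \<and> measure lebesgue T \<le> e"
    by blast
qed

lemma real_cut_mono: "x \<le> y \<Longrightarrow> real_cut x \<le> real_cut y"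
  unfolding le_fun_def le_bool_def real_cut_def by simp

lemma binary_real_cut_strict_mono:
  assumes "x < y"
  shows "binary_real (real_cut x) < binary_real (real_cut y)"
proof -
  obtain n where "x < rat_of_code n" "rat_of_code n < y"
    using rat_of_code_between[OF assms] by blast
  then show ?thesis
    using assms by (intro binary_real_strict_mono[where n = n]) (auto simp: real_cut_def)
qed

lemma inj_binary_real_cut: "inj (\<lambda>x. binary_real (real_cut x))"
  by (rule strict_mono_imp_inj_on) (simp add: strict_mono_def binary_real_cut_strict_mono)

lemma range_binary_real_cut_null: "range (\<lambda>x. binary_real (real_cut x)) \<in> null_sets lebesgue"
proof -
  have "range (\<lambda>x. binary_real (real_cut x)) = binary_real ` range real_cut"
    by auto
  also have "\<dots> \<in> null_sets lebesgue"
  proof (rule binary_real_chain_null)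
    fix A B assume "A \<in> range real_cut" "B \<in> range real_cut"
    then obtain x y where "A = real_cut x" "B = real_cut y" by blast
    then show "A \<le> B \<or> B \<le> A"
      using real_cut_mono[of x y] real_cut_mono[of y x] linorder_linear[of x y] by blast
  qed
  finally show ?thesis .
qed

lemma countable_binary_real_cut_Rats: "countable {x. binary_real (real_cut x) \<in> \<rat>}"
proof (rule countable_image_inj_on)
  show "countable ((\<lambda>x. binary_real (real_cut x)) ` {x. binary_real (real_cut x) \<in> \<rat>})"
    by (rule countable_subset[OF _ countable_rat]) auto
  show "inj_on (\<lambda>x. binary_real (real_cut x)) {x. binary_real (real_cut x) \<in> \<rat>}"
    using inj_binary_real_cut by (rule inj_on_subset) simp
qed

text \<open>
  To decide \<open>q\<^sub>n < binary_real A\<close>, search for an \<open>N\<close> such that the dyadic interval of length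
  \<open>2\<^sup>-\<^sup>N\<close> determined by the first \<open>N\<close> digits of \<open>A\<close> excludes \<open>q\<^sub>n\<close>; the search terminates
  because \<open>binary_real A\<close> is irrational.
\<close>
lemma turing_reducible_cut_binary_real:
  assumes irrational: "binary_real A \<notin> \<rat>"
  shows "turing_reducible (real_cut (binary_real A)) A"
proof -
  let ?lo = "\<lambda>N. rat_of_code (code_of_frac (binary_prefix A N) 0 (2 ^ N))"
  let ?hi = "\<lambda>N. rat_of_code (code_of_frac (binary_prefix A N + 1) 0 (2 ^ N))"
  define separates where "separates n N \<longleftrightarrow> rat_of_code n < ?lo N \<or> ?hi N < rat_of_code n" for n N
  have bounds: "?lo N \<le> binary_real A" "binary_real A \<le> ?hi N" for N
    using binary_real_bounds[of A N] by (simp_all add: rat_of_code_dyadic add.commute)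
  have ex: "\<exists>N. separates n N" for n
  proof -
    have "rat_of_code n \<noteq> binary_real A"
      using irrational rat_of_code_in_Rats by metis
    then obtain N where N: "(1/2) ^ N < \<bar>binary_real A - rat_of_code n\<bar>"
      using real_arch_pow_inv[of "\<bar>binary_real A - rat_of_code n\<bar>" "1/2"] by auto
    have "?hi N = ?lo N + (1/2) ^ N"
      by (simp add: rat_of_code_dyadic add_divide_distrib power_one_over)
    then have "separates n N"
      using N bounds[of N] unfolding separates_def by linarith
    then show ?thesis ..
  qed
  define stage where "stage n = (LEAST N. separates n N)" for n
  have "recursive_in A 1 (\<lambda>v. stage (v ! 0))"
    unfolding stage_def
  proof (rule recursive_in_Least[OF _ ex])
    show "recursive_in A 2 (\<lambda>v. of_bool (separates (v ! 1) (v ! 0)))"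
      unfolding separates_def by (intro recursive_in_intros) simp_all
  qed (simp add: recursive_in_proj)
  then have "recursive_in A 1 (\<lambda>v. of_bool (rat_of_code (v ! 0) < ?lo (stage (v ! 0))))"
    by (intro recursive_in_intros) simp_all
  moreover have "rat_of_code n < ?lo (stage n) \<longleftrightarrow> real_cut (binary_real A) n" for n
  proof -
    have "separates n (stage n)"
      unfolding stage_def by (rule LeastI_ex[OF ex])
    then show ?thesis
      using bounds[of "stage n"] unfolding separates_def real_cut_def by linarith
  qed
  ultimately show ?thesis
    by (auto intro: turing_reducible_if_recursive_in elim: recursive_in_cong)
qed

text \<open>
  If \<open>q\<^sub>n < x\<close> then every digit \<open>m\<close> with \<open>q\<^sub>m < q\<^sub>n\<close> of the cut of \<open>x\<close> is \<open>1\<close>, and if \<open>x < q\<^sub>n\<close>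
  then every digit with \<open>q\<^sub>n < q\<^sub>m\<close> is \<open>0\<close>; so \<open>S\<close> bounds the first \<open>n\<close> digits from the
  appropriate side, and digit \<open>n\<close> decides the comparison.
\<close>
lemma cut_below_iff_binary_real_cut:
  fixes n :: nat
  assumes "x \<notin> \<rat>" and "binary_real (real_cut x) \<notin> \<rat>"
  defines "S \<equiv> binary_prefix (\<lambda>m. rat_of_code m < rat_of_code n) n"
  shows "rat_of_code n < x \<longleftrightarrow> real (2 * S + 1) / 2 ^ Suc n < binary_real (real_cut x)"
proof
  assume below: "rat_of_code n < x"
  have "S \<le> binary_prefix (real_cut x) n"
    unfolding S_def using below by (intro binary_prefix_mono) (auto simp: real_cut_def)
  then have "real (2 * S + 1) / 2 ^ Suc n \<le> real (binary_prefix (real_cut x) (Suc n)) / 2 ^ Suc n"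
    using below by (intro divide_right_mono) (simp_all add: real_cut_def)
  also have "\<dots> \<le> binary_real (real_cut x)"
    by (rule binary_real_bounds)
  finally have "real (2 * S + 1) / 2 ^ Suc n \<le> binary_real (real_cut x)" .
  moreover have "real (2 * S + 1) / 2 ^ Suc n \<in> \<rat>" by simp
  ultimately show "real (2 * S + 1) / 2 ^ Suc n < binary_real (real_cut x)"
    using assms(2) unfolding le_less by metis
next
  assume above: "real (2 * S + 1) / 2 ^ Suc n < binary_real (real_cut x)"
  show "rat_of_code n < x"
  proof (rule ccontr)
    assume "\<not> rat_of_code n < x"
    moreover have "rat_of_code n \<noteq> x"
      using assms(1) rat_of_code_in_Rats by metis
    ultimately have "x < rat_of_code n" by simp
    then have "binary_prefix (real_cut x) n \<le> S"
      unfolding S_def by (intro binary_prefix_mono) (auto simp: real_cut_def)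
    then have "real (binary_prefix (real_cut x) (Suc n)) + 1 \<le> real (2 * S + 1)"
      using \<open>x < rat_of_code n\<close> by (simp add: real_cut_def)
    then have "(real (binary_prefix (real_cut x) (Suc n)) + 1) / 2 ^ Suc n \<le> real (2 * S + 1) / 2 ^ Suc n"
      by (rule divide_right_mono) simp
    then have "binary_real (real_cut x) \<le> real (2 * S + 1) / 2 ^ Suc n"
      using binary_real_bounds(2)[of "real_cut x" "Suc n"] by linarith
    with above show False by simp
  qed
qed

lemma turing_equiv_binary_real_cut:
  assumes "x \<notin> \<rat>" and "binary_real (real_cut x) \<notin> \<rat>"
  shows "turing_equiv_real x (binary_real (real_cut x))"
  unfolding turing_equiv_real_def turing_equiv_set_def
proof
  let ?code = "\<lambda>n. code_of_frac (2 * binary_prefix (\<lambda>m. rat_of_code m < rat_of_code n) n + 1) 0 (2 ^ Suc n)"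
  have "recursive_in A 2 (\<lambda>v. binary_prefix (\<lambda>m. rat_of_code m < rat_of_code (v ! 1)) (v ! 0))" for A
    by (rule recursive_in_binary_prefix) (auto intro!: recursive_in_intros)
  from recursive_in_compose2[OF this recursive_in_proj recursive_in_proj]
  have "recursive_in A 1 (\<lambda>v. ?code (v ! 0))" for A
    by (auto intro!: recursive_in_intros)
  then show "turing_reducible (real_cut x) (real_cut (binary_real (real_cut x)))"
    by (rule turing_reducible_via_map)
       (simp add: real_cut_def cut_below_iff_binary_real_cut[OF assms] rat_of_code_code_of_frac)
  show "turing_reducible (real_cut (binary_real (real_cut x))) (real_cut x)"
    using assms(2) by (rule turing_reducible_cut_binary_real)
qed

section \<open>A zero-one law for sets invariant under doubling and translation\<close>

definition dyadic_interval :: "nat \<Rightarrow> int \<Rightarrow> int \<Rightarrow> real set" where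
  "dyadic_interval j k l = {of_int k / 2 ^ j ..< of_int l / 2 ^ j}"

lemma dyadic_interval_rescale: "dyadic_interval j k l = dyadic_interval (j + i) (k * 2 ^ i) (l * 2 ^ i)"
  by (simp add: dyadic_interval_def power_add field_simps)

lemma dyadic_interval_empty: "l \<le> k \<Longrightarrow> dyadic_interval j k l = {}"
  by (auto simp: dyadic_interval_def divide_right_mono)

lemma dyadic_interval_Int:
  "dyadic_interval j k l \<inter> dyadic_interval j k' l' = dyadic_interval j (max k k') (min l l')"
proof -
  have mono: "of_int a / 2 ^ j \<le> (of_int b / 2 ^ j :: real) \<longleftrightarrow> a \<le> b" for a b
    by (simp add: divide_le_cancel)
  show ?thesis
    by (simp add: dyadic_interval_def Int_atLeastLessThan max_def min_def mono)
qed

lemma Int_stable_dyadic_intervals: "Int_stable (range (\<lambda>(j, k, l). dyadic_interval j k l))"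
proof (rule Int_stableI, clarsimp)
  fix j k l j' k' l'
  have "dyadic_interval j k l \<inter> dyadic_interval j' k' l' =
      dyadic_interval (j + j') (max (k * 2 ^ j') (k' * 2 ^ j)) (min (l * 2 ^ j') (l' * 2 ^ j))"
    using dyadic_interval_rescale[of j k l j'] dyadic_interval_rescale[of j' k' l' j]
    by (simp add: dyadic_interval_Int add.commute)
  then show "dyadic_interval j k l \<inter> dyadic_interval j' k' l' \<in> range (\<lambda>(j, k, l). dyadic_interval j k l)"
    by (metis (no_types, lifting) case_prod_conv rangeI)
qed

lemma lessThan_eq_Union_dyadic_intervals:
  "{..<x} = (\<Union>n::nat. \<Union>j::nat. dyadic_interval j (- (int n * 2 ^ j)) \<lfloor>x * 2 ^ j\<rfloor>)"
proof (intro set_eqI iffI)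
  fix y assume "y \<in> {..<x}"
  then obtain j where j: "(1/2::real) ^ j < x - y"
    using real_arch_pow_inv[of "x - y" "1/2"] by auto
  obtain n :: nat where n: "- y \<le> real n"
    using real_arch_simple by blast
  have "x * 2 ^ j - 1 < of_int \<lfloor>x * 2 ^ j\<rfloor>" by linarith
  then have "(x * 2 ^ j - 1) / 2 ^ j < of_int \<lfloor>x * 2 ^ j\<rfloor> / 2 ^ j"
    by (simp add: divide_strict_right_mono)
  then have "x - 1 / 2 ^ j < of_int \<lfloor>x * 2 ^ j\<rfloor> / 2 ^ j"
    by (simp add: diff_divide_distrib)
  then have "y \<in> dyadic_interval j (- (int n * 2 ^ j)) \<lfloor>x * 2 ^ j\<rfloor>"
    using j n by (simp add: dyadic_interval_def power_one_over)
  then show "y \<in> (\<Union>n. \<Union>j. dyadic_interval j (- (int n * 2 ^ j)) \<lfloor>x * 2 ^ j\<rfloor>)"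
    by blast
next
  fix y assume "y \<in> (\<Union>n. \<Union>j. dyadic_interval j (- (int n * 2 ^ j)) \<lfloor>x * 2 ^ j\<rfloor>)"
  then obtain j n where "y \<in> dyadic_interval j (- (int n * 2 ^ j)) \<lfloor>x * 2 ^ j\<rfloor>" by blast
  then have "y < of_int \<lfloor>x * 2 ^ j\<rfloor> / 2 ^ j" by (simp add: dyadic_interval_def)
  also have "\<dots> \<le> x" by (simp add: divide_le_eq)
  finally show "y \<in> {..<x}" by simp
qed

lemma sets_borel_eq_dyadic_intervals:
  "sets (borel :: real measure) = sigma_sets UNIV (range (\<lambda>(j, k, l). dyadic_interval j k l))"
proof -
  let ?D = "range (\<lambda>(j, k, l). dyadic_interval j k l)"
  have "{..<x} \<in> sigma_sets UNIV ?D" for x :: real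
    unfolding lessThan_eq_Union_dyadic_intervals
    by (intro sigma_sets.Union sigma_sets.Basic) auto
  then have "borel = sigma UNIV ?D"
    by (intro borel_eq_sigmaI1[OF borel_Iio]) (auto simp: dyadic_interval_def)
  then show ?thesis
    by (metis sets_measure_of Pow_UNIV subset_UNIV)
qed

lemma measure_eqI_dyadic_intervals:
  fixes M M' :: "real measure"
  assumes sets: "sets M = sets borel" "sets M' = sets borel"
    and eq: "\<And>j k l. emeasure M (dyadic_interval j k l) = emeasure M' (dyadic_interval j k l)"
    and finite: "\<And>k. emeasure M (dyadic_interval 0 k (k + 1)) \<noteq> \<infinity>"
  shows "M = M'"
proof -
  define cell where "cell i = dyadic_interval 0 (int_decode i) (int_decode i + 1)" for i
  have "y \<in> cell (int_encode \<lfloor>y\<rfloor>)" for y :: real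
    by (simp add: cell_def dyadic_interval_def)
  then have "(\<Union>i. cell i) = UNIV" by blast
  then show ?thesis
    using sets eq finite
    by (intro measure_eqI_generator_eq[OF Int_stable_dyadic_intervals, where A = cell])
       (auto simp: sets_borel_eq_dyadic_intervals cell_def)
qed

lemma doubling_translation_invariant_dyadic:
  fixes T :: "real set"
  assumes double: "\<And>x. x \<in> T \<longleftrightarrow> 2 * x \<in> T" and shift: "\<And>x. x \<in> T \<longleftrightarrow> x + 1 \<in> T"
  shows "(x + of_int k) / 2 ^ j \<in> T \<longleftrightarrow> x \<in> T"
proof -
  have int_shift: "x + of_int k \<in> T \<longleftrightarrow> x \<in> T" for x
  proof (induction k rule: int_induct[where k = 0])
    case (step1 i)
    then show ?case using shift[of "x + of_int i"] by (simp add: add.assoc)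
  next
    case (step2 i)
    then show ?case using shift[of "x + of_int (i - 1)"] by (simp add: add.assoc)
  qed simp
  have "y / 2 ^ j \<in> T \<longleftrightarrow> y \<in> T" for y
  proof (induction j)
    case (Suc j)
    then show ?case using double[of "y / 2 ^ Suc j"] by simp
  qed simp
  then show ?thesis using int_shift by simp
qed

lemma emeasure_Int_dyadic_cell:
  fixes T :: "real set"
  assumes double: "\<And>x. x \<in> T \<longleftrightarrow> 2 * x \<in> T" and shift: "\<And>x. x \<in> T \<longleftrightarrow> x + 1 \<in> T"
  shows "emeasure lebesgue (T \<inter> dyadic_interval j k (k + 1)) =
    ennreal (1 / 2 ^ j) * emeasure lebesgue (T \<inter> {0..<1})"
proof -
  let ?f = "\<lambda>x::real. (1 / 2 ^ j) *\<^sub>R x + of_int k / 2 ^ j"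
  have "T \<inter> dyadic_interval j k (k + 1) = ?f ` (T \<inter> {0..<1})"
  proof (intro set_eqI iffI)
    fix y assume y: "y \<in> T \<inter> dyadic_interval j k (k + 1)"
    define x where "x = 2 ^ j * y - of_int k"
    have "y = ?f x" by (simp add: x_def field_simps)
    moreover have "x \<in> T \<inter> {0..<1}"
      using y doubling_translation_invariant_dyadic[OF double shift, of x k j]
      by (auto simp: x_def dyadic_interval_def field_simps)
    ultimately show "y \<in> ?f ` (T \<inter> {0..<1})" by blast
  next
    fix y assume "y \<in> ?f ` (T \<inter> {0..<1})"
    then obtain x where "x \<in> T" "0 \<le> x" "x < 1" and y: "y = (x + of_int k) / 2 ^ j"
      by (auto simp: add_divide_distrib)
    then show "y \<in> T \<inter> dyadic_interval j k (k + 1)"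
      using doubling_translation_invariant_dyadic[OF double shift, of x k j]
      by (simp add: dyadic_interval_def divide_right_mono divide_strict_right_mono)
  qed
  then show ?thesis
    using emeasure_lebesgue_affine[of "1 / 2 ^ j" "of_int k / 2 ^ j" "T \<inter> {0..<1}"] by simp
qed

lemma emeasure_Int_dyadic_interval:
  fixes T :: "real set"
  assumes T: "T \<in> sets lebesgue"
    and double: "\<And>x. x \<in> T \<longleftrightarrow> 2 * x \<in> T" and shift: "\<And>x. x \<in> T \<longleftrightarrow> x + 1 \<in> T"
  shows "emeasure lebesgue (T \<inter> dyadic_interval j k (k + int n)) =
    ennreal (real n / 2 ^ j) * emeasure lebesgue (T \<inter> {0..<1})"
proof (induction n)
  case 0
  then show ?case by (simp add: dyadic_interval_empty)
next
  case (Suc n)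
  let ?I = "dyadic_interval j k (k + int n)" and ?J = "dyadic_interval j (k + int n) (k + int n + 1)"
  have "dyadic_interval j a b \<in> sets lebesgue" for a b
    by (simp add: dyadic_interval_def)
  then have meas: "T \<inter> ?I \<in> sets lebesgue" "T \<inter> ?J \<in> sets lebesgue"
    using T by auto
  have "T \<inter> dyadic_interval j k (k + int (Suc n)) = (T \<inter> ?I) \<union> (T \<inter> ?J)"
    by (auto simp: dyadic_interval_def divide_simps)
  moreover have "(T \<inter> ?I) \<inter> (T \<inter> ?J) = {}"
    by (auto simp: dyadic_interval_def)
  ultimately have "emeasure lebesgue (T \<inter> dyadic_interval j k (k + int (Suc n))) =
      emeasure lebesgue (T \<inter> ?I) + emeasure lebesgue (T \<inter> ?J)"
    using plus_emeasure[OF meas] by simp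
  also have "\<dots> = ennreal (real n / 2 ^ j) * emeasure lebesgue (T \<inter> {0..<1}) +
      ennreal (1 / 2 ^ j) * emeasure lebesgue (T \<inter> {0..<1})"
    using Suc emeasure_Int_dyadic_cell[OF double shift, of j "k + int n"] by simp
  also have "\<dots> = ennreal (real (Suc n) / 2 ^ j) * emeasure lebesgue (T \<inter> {0..<1})"
    by (simp add: distrib_right[symmetric] ennreal_plus[symmetric] add_divide_distrib add.commute
        del: ennreal_plus)
  finally show ?case .
qed

lemma lebesgue_set_borel_part:
  assumes "T \<in> sets lebesgue"
  obtains S :: "'a::euclidean_space set" where "S \<in> sets borel"
    and "\<And>X. X \<in> sets borel \<Longrightarrow> emeasure lborel (S \<inter> X) = emeasure lebesgue (T \<inter> X)"
proof -
  obtain S N N' where TS: "T = S \<union> N" and "N \<subseteq> N'" and "N' \<in> null_sets lborel"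
    and S: "S \<in> sets borel"
    using assms by (rule sets_completionE) simp
  have "emeasure lborel (S \<inter> X) = emeasure lebesgue (T \<inter> X)" if X: "X \<in> sets borel" for X
  proof -
    have "N \<inter> X \<in> null_sets lebesgue"
      using \<open>N \<subseteq> N'\<close> \<open>N' \<in> null_sets lborel\<close>
      by (blast intro: null_sets_completion_subset null_sets_completionI)
    then have "emeasure lebesgue (T \<inter> X) = emeasure lebesgue (S \<inter> X)"
      using S X emeasure_Un_null_set[of "S \<inter> X" lebesgue "N \<inter> X"] TS by (simp add: Int_Un_distrib2)
    also have "\<dots> = emeasure lborel (S \<inter> X)"
      using S X by simp
    finally show ?thesis by simp
  qed
  with S show thesis by (rule that)
qed

text \<open>
  With \<open>S\<close> the Borel part of \<open>T\<close>, the measures \<open>S \<inter> _\<close> and \<open>a \<cdot> \<lambda>\<close> agree on dyadic intervals,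
  hence everywhere; evaluating both at \<open>S \<inter> [0, 1)\<close> gives \<open>a = a\<^sup>2\<close>.
\<close>
lemma emeasure_invariant_idempotent:
  fixes T :: "real set"
  assumes T: "T \<in> sets lebesgue"
    and double: "\<And>x. x \<in> T \<longleftrightarrow> 2 * x \<in> T" and shift: "\<And>x. x \<in> T \<longleftrightarrow> x + 1 \<in> T"
  defines "a \<equiv> emeasure lebesgue (T \<inter> {0..<1})"
  shows "a * a = a"
proof -
  obtain S :: "real set" where S: "S \<in> sets borel"
    and S_T: "\<And>X. X \<in> sets borel \<Longrightarrow> emeasure lborel (S \<inter> X) = emeasure lebesgue (T \<inter> X)"
    using lebesgue_set_borel_part[OF T] by blast
  define M1 where "M1 = density lborel (indicator S :: real \<Rightarrow> ennreal)"
  define M2 where "M2 = density lborel (\<lambda>_::real. a)"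
  have M1: "emeasure M1 X = emeasure lebesgue (T \<inter> X)" if "X \<in> sets borel" for X
    using that S unfolding M1_def S_T[OF that, symmetric]
    by (simp add: emeasure_density indicator_inter_arith[symmetric] Int_commute)
  have M2: "emeasure M2 X = a * emeasure lborel X" if "X \<in> sets borel" for X
    using that unfolding M2_def by (simp add: emeasure_density_const)
  have "M1 = M2"
  proof (rule measure_eqI_dyadic_intervals)
    show "sets M1 = sets borel" "sets M2 = sets borel"
      by (simp_all add: M1_def M2_def)
    show "emeasure M1 (dyadic_interval j k l) = emeasure M2 (dyadic_interval j k l)" for j k l
    proof (cases "k \<le> l")
      case False
      then show ?thesis by (simp add: dyadic_interval_empty M1_def M2_def)
    next
      case True
      then obtain n where l: "l = k + int n" using zle_iff_zadd by blast
      have "emeasure lborel (dyadic_interval j k l) = ennreal (real n / 2 ^ j)"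
        by (simp add: l dyadic_interval_def divide_right_mono diff_divide_distrib[symmetric])
      then show ?thesis
        using M1[of "dyadic_interval j k l"] M2[of "dyadic_interval j k l"]
          emeasure_Int_dyadic_interval[OF T double shift, of j k n]
        by (simp add: l a_def mult.commute dyadic_interval_def)
    qed
    show "emeasure M1 (dyadic_interval 0 k (k + 1)) \<noteq> \<infinity>" for k
    proof -
      have "emeasure M1 (dyadic_interval 0 k (k + 1)) = emeasure lebesgue (T \<inter> dyadic_interval 0 k (k + 1))"
        by (simp add: M1 dyadic_interval_def)
      also have "\<dots> \<le> emeasure lebesgue (dyadic_interval 0 k (k + 1))"
        by (rule emeasure_mono) (auto simp: dyadic_interval_def)
      also have "\<dots> = 1" by (simp add: dyadic_interval_def)
      finally show ?thesis using ennreal_one_less_top by (auto simp: top_unique)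
    qed
  qed
  have "emeasure M1 (S \<inter> {0..<1}) = a"
    using M1[of "S \<inter> {0..<1}"] S_T[of "S \<inter> {0..<1}"] S_T[of "{0..<1}"] S
    by (simp add: a_def Int_assoc[symmetric])
  moreover have "emeasure M2 (S \<inter> {0..<1}) = a * a"
    using M2[of "S \<inter> {0..<1}"] S_T[of "{0..<1}"] S by (simp add: a_def)
  ultimately show ?thesis using \<open>M1 = M2\<close> by simp
qed

lemma zero_one_law_doubling_translation:
  fixes T :: "real set"
  assumes T: "T \<in> sets lebesgue"
    and double: "\<And>x. x \<in> T \<longleftrightarrow> 2 * x \<in> T" and shift: "\<And>x. x \<in> T \<longleftrightarrow> x + 1 \<in> T"
  shows "T \<inter> {0..<1} \<in> null_sets lebesgue \<or> {0..<1} - T \<in> null_sets lebesgue"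
proof -
  let ?a = "emeasure lebesgue (T \<inter> {0..<1})"
  have meas: "T \<inter> {0..<1} \<in> sets lebesgue" "{0..<1} - T \<in> sets lebesgue"
    using T by auto
  have "?a \<le> emeasure lebesgue {0..<1::real}"
    by (rule emeasure_mono) auto
  then have "?a \<le> 1" by simp
  then obtain r where r: "?a = ennreal r" "0 \<le> r"
    by (metis ennreal_cases ennreal_one_less_top not_le top_greatest)
  have "r * r = r"
    using emeasure_invariant_idempotent[OF T double shift] r by (simp add: ennreal_mult[symmetric])
  then consider "r = 0" | "r = 1" by (metis mult_cancel_right1 mult_zero_left)
  then show ?thesis
  proof cases
    case 1
    then show ?thesis using meas r by (simp add: null_sets_def)
  next
    case 2
    have "emeasure lebesgue ({0..<1} - T) = emeasure lebesgue ({0..<1} - (T \<inter> {0..<1}))"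
      by (rule arg_cong[where f = "emeasure lebesgue"]) auto
    also have "\<dots> = emeasure lebesgue {0..<1::real} - ?a"
      using meas r 2 by (intro emeasure_Diff) auto
    finally show ?thesis using meas r 2 by (simp add: null_sets_def)
  qed
qed

lemma null_sets_level_less:
  fixes f :: "real \<Rightarrow> real"
  assumes "\<And>s. s < t \<Longrightarrow> {x\<in>I. f x < s} \<in> null_sets lebesgue"
  shows "{x\<in>I. f x < t} \<in> null_sets lebesgue"
proof -
  have "{x\<in>I. f x < t} \<subseteq> (\<Union>n. {x\<in>I. f x < t - 1 / Suc n})"
  proof clarify
    fix x assume "x \<in> I" "f x < t"
    then obtain n :: nat where "1 / Suc n < t - f x"
      using reals_Archimedean[of "t - f x"] by (auto simp: inverse_eq_divide)
    with \<open>x \<in> I\<close> show "x \<in> (\<Union>n. {x\<in>I. f x < t - 1 / Suc n})"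
      by (intro UN_I[of n]) auto
  qed
  moreover have "(\<Union>n. {x\<in>I. f x < t - 1 / Suc n}) \<in> null_sets lebesgue"
    by (intro null_sets_UN assms) simp
  ultimately show ?thesis
    by (rule null_sets_completion_subset)
qed

lemma null_sets_level_greater:
  fixes f :: "real \<Rightarrow> real"
  assumes "\<And>s. t < s \<Longrightarrow> {x\<in>I. s \<le> f x} \<in> null_sets lebesgue"
  shows "{x\<in>I. t < f x} \<in> null_sets lebesgue"
proof -
  have "{x\<in>I. t < f x} \<subseteq> (\<Union>n. {x\<in>I. t + 1 / Suc n \<le> f x})"
  proof clarify
    fix x assume "x \<in> I" "t < f x"
    then obtain n :: nat where "1 / Suc n < f x - t"
      using reals_Archimedean[of "f x - t"] by (auto simp: inverse_eq_divide)
    with \<open>x \<in> I\<close> show "x \<in> (\<Union>n. {x\<in>I. t + 1 / Suc n \<le> f x})"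
      by (intro UN_I[of n]) auto
  qed
  moreover have "(\<Union>n. {x\<in>I. t + 1 / Suc n \<le> f x}) \<in> null_sets lebesgue"
    by (intro null_sets_UN assms) simp
  ultimately show ?thesis
    by (rule null_sets_completion_subset)
qed

lemma ae_constant_if_level_sets_zero_one:
  fixes f :: "real \<Rightarrow> real" and I :: "real set"
  assumes bounded: "f ` I \<subseteq> {a..b}"
    and zero_one: "\<And>t. {x\<in>I. f x < t} \<in> null_sets lebesgue \<or> {x\<in>I. t \<le> f x} \<in> null_sets lebesgue"
  shows "\<exists>t. {x\<in>I. f x \<noteq> t} \<in> null_sets lebesgue"
proof (cases "I \<in> null_sets lebesgue")
  case True
  then show ?thesis by (blast intro: null_sets_completion_subset)
next
  case I: False
  define low where "low = {t. {x\<in>I. f x < t} \<in> null_sets lebesgue}"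
  have "{x\<in>I. f x < a} = {}"
    using bounded by fastforce
  then have "a \<in> low" unfolding low_def by (metis mem_Collect_eq null_sets.empty_sets)
  have bdd: "bdd_above low"
  proof (rule bdd_aboveI)
    show "t \<le> b" if "t \<in> low" for t
    proof (rule ccontr)
      assume "\<not> t \<le> b"
      then have "{x\<in>I. f x < t} = I" using bounded by force
      then show False using I that by (simp add: low_def)
    qed
  qed
  define t where "t = Sup low"
  have "{x\<in>I. f x < t} \<in> null_sets lebesgue"
  proof (rule null_sets_level_less)
    fix s assume "s < t"
    then obtain s' where "s' \<in> low" "s < s'"
      using less_cSup_iff[OF _ bdd] \<open>a \<in> low\<close> unfolding t_def by blast
    then show "{x\<in>I. f x < s} \<in> null_sets lebesgue"
      unfolding low_def by (auto elim!: null_sets_completion_subset[rotated])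
  qed
  moreover have "{x\<in>I. t < f x} \<in> null_sets lebesgue"
  proof (rule null_sets_level_greater)
    fix s assume "t < s"
    then have "s \<notin> low"
      using cSup_upper[OF _ bdd] unfolding t_def by fastforce
    then show "{x\<in>I. s \<le> f x} \<in> null_sets lebesgue"
      using zero_one[of s] by (simp add: low_def)
  qed
  ultimately have "{x\<in>I. f x < t} \<union> {x\<in>I. t < f x} \<in> null_sets lebesgue"
    by (rule null_sets.Un)
  moreover have "{x\<in>I. f x \<noteq> t} = {x\<in>I. f x < t} \<union> {x\<in>I. t < f x}"
    by auto
  ultimately show ?thesis by (intro exI[of _ t]) simp
qed

section \<open>Representatives of Turing degrees\<close>

lemma turing_closure_equiv_closed:
  assumes "turing_equiv_real x y"
  shows "x \<in> turing_closure L \<longleftrightarrow> y \<in> turing_closure L"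
proof -
  have "y \<in> turing_closure L" if xy: "turing_equiv_real x y" and x: "x \<in> turing_closure L" for x y
  proof -
    obtain z where "z \<in> L" "turing_equiv_real x z"
      using x by (auto simp: turing_closure_def)
    then show ?thesis
      using turing_equiv_real_trans[OF turing_equiv_real_sym[OF xy]]
      by (auto simp: turing_closure_def)
  qed
  then show ?thesis
    using assms turing_equiv_real_sym by blast
qed

lemma turing_closure_zero_one:
  assumes "turing_closure L \<in> sets lebesgue"
  shows "turing_closure L \<inter> {0..<1} \<in> null_sets lebesgue \<or> {0..<1} - turing_closure L \<in> null_sets lebesgue"
  using assms
  by (rule zero_one_law_doubling_translation)
     (use turing_equiv_real_double turing_equiv_real_plus1 turing_closure_equiv_closed in blast)+

lemma null_set_with_cocountable_turing_closure:
  "\<exists>N. N \<in> null_sets lebesgue \<and> N \<subseteq> {0..1} \<and> countable (- turing_closure N)"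
proof (intro exI conjI)
  let ?\<psi> = "\<lambda>x. binary_real (real_cut x)"
  let ?N = "?\<psi> ` {x. x \<notin> \<rat> \<and> ?\<psi> x \<notin> \<rat>}"
  show "?N \<in> null_sets lebesgue"
    by (rule null_sets_completion_subset[OF _ range_binary_real_cut_null]) auto
  show "?N \<subseteq> {0..1}"
    using binary_real_nonneg binary_real_le_1 by auto
  have "- turing_closure ?N \<subseteq> \<rat> \<union> {x. ?\<psi> x \<in> \<rat>}"
    using turing_equiv_binary_real_cut by (auto simp: turing_closure_def)
  then show "countable (- turing_closure ?N)"
    using countable_rat countable_binary_real_cut_Rats by (blast intro: countable_subset)
qed

definition closure_rep :: "real set \<Rightarrow> real \<Rightarrow> real" where
  "closure_rep N y = (SOME z. z \<in> N \<and> turing_equiv_real y z)"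

lemma closure_rep:
  assumes "y \<in> turing_closure N"
  shows "closure_rep N y \<in> N" and "turing_equiv_real y (closure_rep N y)"
proof -
  have "\<exists>z. z \<in> N \<and> turing_equiv_real y z"
    using assms by (auto simp: turing_closure_def)
  then have "closure_rep N y \<in> N \<and> turing_equiv_real y (closure_rep N y)"
    unfolding closure_rep_def by (rule someI_ex)
  then show "closure_rep N y \<in> N" and "turing_equiv_real y (closure_rep N y)"
    by simp_all
qed

lemma closure_rep_cong:
  assumes "turing_equiv_real y y'"
  shows "closure_rep N y = closure_rep N y'"
proof -
  have "turing_equiv_real y z \<longleftrightarrow> turing_equiv_real y' z" for z
    using turing_equiv_real_trans[OF turing_equiv_real_sym[OF assms], of z]
      turing_equiv_real_trans[OF assms, of z] by blast
  then show ?thesis unfolding closure_rep_def by simp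
qed

lemma closure_rep_level_set:
  "{y \<in> turing_closure N. closure_rep N y \<in> D} =
    turing_closure (closure_rep N ` turing_closure N \<inter> D)"
proof (intro set_eqI iffI)
  fix y assume "y \<in> {y \<in> turing_closure N. closure_rep N y \<in> D}"
  then show "y \<in> turing_closure (closure_rep N ` turing_closure N \<inter> D)"
    using closure_rep(2) by (auto simp: turing_closure_def)
next
  fix y assume "y \<in> turing_closure (closure_rep N ` turing_closure N \<inter> D)"
  then obtain w where w: "w \<in> turing_closure N" "closure_rep N w \<in> D"
    and "turing_equiv_real y (closure_rep N w)"
    by (auto simp: turing_closure_def)
  then have "turing_equiv_real y w"
    using closure_rep(2)[OF w(1)] turing_equiv_real_sym turing_equiv_real_trans by blast
  then show "y \<in> {y \<in> turing_closure N. closure_rep N y \<in> D}"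
    using w turing_closure_equiv_closed closure_rep_cong by auto
qed

lemma closure_rep_level_sets_zero_one:
  assumes "turing_closure (closure_rep N ` turing_closure N \<inter> {..<t}) \<in> sets lebesgue"
  defines "I \<equiv> {0..<1} \<inter> turing_closure N"
  shows "{x\<in>I. closure_rep N x < t} \<in> null_sets lebesgue \<or> {x\<in>I. t \<le> closure_rep N x} \<in> null_sets lebesgue"
  using turing_closure_zero_one[OF assms(1), folded closure_rep_level_set]
proof
  assume "{y \<in> turing_closure N. closure_rep N y \<in> {..<t}} \<inter> {0..<1} \<in> null_sets lebesgue"
  moreover have "{x\<in>I. closure_rep N x < t} = {y \<in> turing_closure N. closure_rep N y \<in> {..<t}} \<inter> {0..<1}"
    by (auto simp: I_def)
  ultimately show ?thesis by simp
next
  assume "{0..<1} - {y \<in> turing_closure N. closure_rep N y \<in> {..<t}} \<in> null_sets lebesgue"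
  moreover have "{x\<in>I. t \<le> closure_rep N x} \<subseteq> {0..<1} - {y \<in> turing_closure N. closure_rep N y \<in> {..<t}}"
    by (auto simp: I_def)
  ultimately show ?thesis by (blast intro: null_sets_completion_subset)
qed

theorem mainTheorem14:
  shows "\<exists>L :: real set. L \<in> sets lebesgue \<and> turing_closure L \<notin> sets lebesgue"
proof (rule ccontr)
  assume "\<not> ?thesis"
  then have closure_measurable: "\<And>L. L \<in> sets lebesgue \<Longrightarrow> turing_closure L \<in> sets lebesgue"
    by blast
  obtain N where N: "N \<in> null_sets lebesgue" "N \<subseteq> {0..1}" and R: "countable (- turing_closure N)"
    using null_set_with_cocountable_turing_closure by blast
  let ?rep = "closure_rep N"
  define I where "I = {0..<1} \<inter> turing_closure N"
  have "?rep ` turing_closure N \<inter> {..<t} \<in> null_sets lebesgue" for t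
    using N(1) closure_rep(1) by (blast intro: null_sets_completion_subset)
  then have "{x\<in>I. ?rep x < t} \<in> null_sets lebesgue \<or> {x\<in>I. t \<le> ?rep x} \<in> null_sets lebesgue" for t
    unfolding I_def by (intro closure_rep_level_sets_zero_one closure_measurable) auto
  moreover have "?rep ` I \<subseteq> {0..1}"
    using closure_rep(1) N(2) by (auto simp: I_def)
  ultimately obtain t where "{x\<in>I. ?rep x \<noteq> t} \<in> null_sets lebesgue"
    using ae_constant_if_level_sets_zero_one by blast
  moreover have "{x\<in>I. ?rep x = t} \<union> - turing_closure N \<in> null_sets lebesgue"
    using R countable_turing_degree[of t] closure_rep(2)
    by (intro null_sets.Un null_sets_completionI countable_imp_null_set_lborel)
       (auto simp: I_def elim: countable_subset[rotated])
  ultimately have "{x\<in>I. ?rep x \<noteq> t} \<union> ({x\<in>I. ?rep x = t} \<union> - turing_closure N) \<in> null_sets lebesgue"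
    by (rule null_sets.Un)
  then have "{0..<1::real} \<in> null_sets lebesgue"
    by (rule null_sets_completion_subset[rotated]) (auto simp: I_def)
  then show False
    by (auto simp: null_sets_def)
qed

end
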